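(* Consider a quantum data-syndrome code of pure distance $d_p$ on $n$ qubits and $m$ measurement bits, subject to noise described by the channel supports $\Gamma=\{\gamma\subseteq[2n+m]: \mathrm{wt}_P(\gamma)\le t\}$ with channel distributions satisfying $P_\gamma(0)>\tfrac12$ for all $\gamma\in\Gamma$. If $t\le\lfloor\frac{d_p-1}{2}\rfloor$, then the total error distribution $P$ is identifiable from the syndrome statistics, i.e. any other family $(P'_\gamma)_{\gamma\in\Gamma}$ of channel distributions for the same $\Gamma$ with $P'_\gamma(0)>\tfrac12$ whose total error distribution $P'$ induces the same syndrome distribution satisfies $P'=P$.
   Context: Phase space representation: a Pauli operator on $n$ qubits (modulo phases) $X^{x_1}Z^{z_1}\otimes\cdots\otimes X^{x_n}Z^{z_n}$ is identified with $(x_1,\dots,x_n,z_1,\dots,z_n)\in\mathbb F_2^{2n}$. For $v=(x,z)\in\mathbb F_2^{2n}$ write $\overline v=(z,x)$. A quantum data-syndrome code is given by pairwise commuting stabilizer generators $g^{(1)},\dots,g^{(l)}\in\mathbb F_2^{2n}$ (i.e. $\overline{g^{(i)}}\cdot g^{(j)}=0$; the generated stabilizer group does not contain $-I$) and a classical code with generator matrix $G_C=[I_l\ A]\in\mathbb F_2^{l\times m}$; for $i\in[m]$ let $f^{(i)}=\sum_{j=1}^l (G_C)_{j,i}g^{(j)}$. Set $N=2n+m$. Errors are $e=(e_d,e_m)\in\mathbb F_2^{2n}\times\mathbb F_2^m=\mathbb F_2^N$, with syndrome $\mathrm{syn}(e)\in\mathbb F_2^m$, $\mathrm{syn}(e)_i=f^{(i)}\cdot\overline{e_d}+(e_m)_i$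 (mod 2). Vectors in $\mathbb F_2^N$ are identified with their supports in $[N]$. The Pauli weight of $e=(x,z,e_m)$ is $\mathrm{wt}_P(e)=|\{i\in[n]: x_i\ne0 \text{ or } z_i\neq 0\}|+|\{j: (e_m)_j\neq 0\}|$. The pure distance is $d_p=\min\{\mathrm{wt}_P(e): e\in\mathbb F_2^N\setminus\{0\},\ \mathrm{syn}(e)=0\}$. A noise model consists of $\Gamma\subseteq 2^{[N]}$ and for each $\gamma\in\Gamma$ a probability distribution $P_\gamma$ on $\mathbb F_2^N$ supported on vectors with support in $\gamma$; the total error distribution $P$ is the distribution of $\sum_\gamma e_\gamma$ with independent $e_\gamma\sim P_\gamma$. The syndrome statistics is the distribution of $\mathrm{syn}(e)$, $e\sim P$. *)

theory Defs
  imports "HOL-Probability.Probability"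
begin

text \<open>Vectors in F_2^N are identified with their supports (subsets of {..<N}),
  indices 0-based: x-part {0..<n}, z-part {n..<2n}, measurement part {2n..<2n+m}.
  Addition in F_2^N is coordinatewise parity.\<close>

text \<open>Value (mod 2, as a boolean: True = 1) of v \<cdot> overline w for v,w in F_2^{2n}.\<close>
definition symp :: "nat \<Rightarrow> nat set \<Rightarrow> nat set \<Rightarrow> bool" where
  "symp n v w = odd (card {k. k < n \<and> k \<in> v \<and> n + k \<in> w}
                   + card {k. k < n \<and> n + k \<in> v \<and> k \<in> w})"

definition GC :: "nat \<Rightarrow> (nat \<Rightarrow> nat \<Rightarrow> bool) \<Rightarrow> nat \<Rightarrow> nat \<Rightarrow> bool" where
  "GC l A j i = (if i < l then j = i else A j (i - l))"

definition fvec :: "nat \<Rightarrow> (nat \<Rightarrow> nat \<Rightarrow> bool) \<Rightarrow> (nat \<Rightarrow> nat set) \<Rightarrow> nat \<Rightarrow> nat set" where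
  "fvec l A g i = {k. odd (card {j. j < l \<and> GC l A j i \<and> k \<in> g j})}"

definition syn :: "nat \<Rightarrow> nat \<Rightarrow> nat \<Rightarrow> (nat \<Rightarrow> nat \<Rightarrow> bool) \<Rightarrow> (nat \<Rightarrow> nat set)
    \<Rightarrow> nat set \<Rightarrow> nat set" where
  "syn n m l A g e = {i. i < m \<and> (symp n (fvec l A g i) (e \<inter> {..<2*n}) \<noteq> (2*n + i \<in> e))}"

definition wtP :: "nat \<Rightarrow> nat \<Rightarrow> nat set \<Rightarrow> nat" where
  "wtP n m e = card {i. i < n \<and> (i \<in> e \<or> n + i \<in> e)} + card {j. j < m \<and> 2*n + j \<in> e}"

definition pure_distance :: "nat \<Rightarrow> nat \<Rightarrow> nat \<Rightarrow> (nat \<Rightarrow> nat \<Rightarrow> bool) \<Rightarrow> (nat \<Rightarrow> nat set) \<Rightarrow> nat" where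
  "pure_distance n m l A g =
     Min {wtP n m e | e. e \<subseteq> {..<2*n+m} \<and> e \<noteq> {} \<and> syn n m l A g e = {}}"

definition Gamma :: "nat \<Rightarrow> nat \<Rightarrow> nat \<Rightarrow> nat set set" where
  "Gamma n m t = {\<gamma>. \<gamma> \<subseteq> {..<2*n+m} \<and> wtP n m \<gamma> \<le> t}"

definition total_error :: "nat set set \<Rightarrow> (nat set \<Rightarrow> nat set pmf) \<Rightarrow> nat set pmf" where
  "total_error \<Gamma> P = map_pmf (\<lambda>E. {i. odd (card {\<gamma> \<in> \<Gamma>. i \<in> E \<gamma>})}) (Pi_pmf \<Gamma> {} P)"

definition syndrome_statistics :: "nat \<Rightarrow> nat \<Rightarrow> nat \<Rightarrow> (nat \<Rightarrow> nat \<Rightarrow> bool) \<Rightarrow> (nat \<Rightarrow> nat set)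
    \<Rightarrow> nat set set \<Rightarrow> (nat set \<Rightarrow> nat set pmf) \<Rightarrow> nat set pmf" where
  "syndrome_statistics n m l A g \<Gamma> P = map_pmf (syn n m l A g) (total_error \<Gamma> P)"

end

theory Submission
  imports Defs
begin

text \<open>
  Work with the Walsh characters \<chi>_u(x) = (-1)^|x \<inter> u| of F_2^N. Since P_\<gamma>(0) > 1/2, every
  channel has a strictly positive characteristic function, and the characteristic function of the
  total error is their product. Its logarithm is therefore a sum of functions each depending only
  on the coordinates in one channel \<gamma>, so its Walsh spectrum is carried by errors of Pauli weight
  at most t. The syndrome statistics determine the characteristic function on the check vectors
  (sum of bar f^(i) over i \<in> \<sigma>, \<sigma>), which span the dual of the space of errors with trivial syndrome.
  As 2t < d_p, distinct errors of weight at most t have distinct syndromes, and orthogonality of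
  characters over the check vectors shows that a function with such a spectrum that vanishes on all
  check vectors is zero. Applied to the difference of the log-characteristic functions of the two
  total error distributions, this shows that they have the same characteristic function, and
  hence coincide.
\<close>

section \<open>Walsh characters\<close>

definition walsh :: "'a set \<Rightarrow> 'a set \<Rightarrow> real" where
  "walsh x u = (-1) ^ card (x \<inter> u)"

definition sign_of :: "bool \<Rightarrow> real" where
  "sign_of b = (if b then -1 else 1)"

definition xor_sum :: "'i set \<Rightarrow> ('i \<Rightarrow> 'a set) \<Rightarrow> 'a set" where
  "xor_sum I W = {k. odd (card {i \<in> I. k \<in> W i})}"

lemma sign_of_odd: "sign_of (odd c) = (-1) ^ c"
  by (simp add: sign_of_def)

lemma sign_of_neq: "sign_of (P \<noteq> Q) = sign_of P * sign_of Q"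
  by (simp add: sign_of_def)

lemma prod_sign_of:
  assumes "finite I"
  shows "(\<Prod>i\<in>I. sign_of (Q i)) = (-1) ^ card {i \<in> I. Q i}"
proof -
  have "(\<Prod>i\<in>I. sign_of (Q i)) = (\<Prod>i\<in>I \<inter> {i. Q i}. -1) * (\<Prod>i\<in>I \<inter> - {i. Q i}. 1)"
    unfolding sign_of_def by (rule prod.If_cases[OF assms])
  also have "I \<inter> {i. Q i} = {i \<in> I. Q i}"
    by blast
  finally show ?thesis
    by simp
qed

lemma walsh_commute: "walsh x u = walsh u x"
  by (simp add: walsh_def Int_commute)

lemma walsh_empty [simp]: "walsh x {} = 1" "walsh {} u = 1"
  by (simp_all add: walsh_def)

lemma walsh_ge_minus_one: "walsh x u \<ge> -1"
  by (simp add: walsh_def minus_one_power_iff)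

lemma abs_walsh [simp]: "\<bar>walsh x u\<bar> = 1"
  by (simp add: walsh_def)

lemma walsh_eq_prod:
  assumes "finite x"
  shows "walsh x u = (\<Prod>j\<in>x. sign_of (j \<in> u))"
  using prod_sign_of[OF assms, of "\<lambda>j. j \<in> u"] by (simp add: walsh_def Int_def)

lemma walsh_sym_diff:
  assumes "finite x"
  shows "walsh x (sym_diff u v) = walsh x u * walsh x v"
  unfolding walsh_eq_prod[OF assms] prod.distrib[symmetric]
  by (intro prod.cong) (auto simp: sign_of_def)

lemma walsh_xor_sum:
  assumes "finite x" "finite I"
  shows "walsh x (xor_sum I W) = (\<Prod>i\<in>I. walsh x (W i))"
proof -
  have "walsh x (xor_sum I W) = (\<Prod>k\<in>x. \<Prod>i\<in>I. sign_of (k \<in> W i))"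
    unfolding walsh_eq_prod[OF assms(1)] xor_sum_def
    by (simp add: sign_of_odd prod_sign_of[OF assms(2)])
  then show ?thesis
    by (subst (asm) prod.swap) (simp add: walsh_eq_prod[OF assms(1)])
qed

lemma sum_involution_eq_zero:
  fixes f :: "'a \<Rightarrow> real"
  assumes "\<And>v. v \<in> S \<Longrightarrow> \<iota> v \<in> S" "\<And>v. v \<in> S \<Longrightarrow> \<iota> (\<iota> v) = v"
    and "\<And>v. v \<in> S \<Longrightarrow> f (\<iota> v) = - f v"
  shows "sum f S = 0"
proof -
  have "sum f S = sum (f \<circ> \<iota>) S"
    by (rule sum.reindex_bij_witness[of S \<iota> \<iota>]) (use assms in auto)
  also have "\<dots> = - sum f S"
    using assms(3) by (simp add: sum_negf)
  finally show ?thesis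
    by simp
qed

lemma sum_walsh_Pow:
  assumes "finite K" "w \<subseteq> K"
  shows "(\<Sum>a\<in>Pow K. walsh a w) = (if w = {} then 2 ^ card K else 0)"
proof (cases "w = {}")
  case False
  then obtain i where "i \<in> w"
    by auto
  have "finite w"
    using assms finite_subset by blast
  have "(\<Sum>a\<in>Pow K. walsh a w) = 0"
  proof (rule sum_involution_eq_zero[where \<iota> = "\<lambda>a. sym_diff a {i}"])
    fix a
    show "walsh (sym_diff a {i}) w = - walsh a w"
      using walsh_sym_diff[OF \<open>finite w\<close>, of a "{i}"] \<open>i \<in> w\<close>
      by (simp add: walsh_commute walsh_def)
  qed (use \<open>i \<in> w\<close> assms in auto)
  with False show ?thesis
    by simp
qed (use assms in \<open>simp add: card_Pow\<close>)

lemma sum_walsh_mult_walsh: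
  assumes "finite K" "x \<subseteq> K" "y \<subseteq> K"
  shows "(\<Sum>u\<in>Pow K. walsh x u * walsh y u) = (if x = y then 2 ^ card K else 0)"
proof -
  have "(\<Sum>u\<in>Pow K. walsh x u * walsh y u) = (\<Sum>u\<in>Pow K. walsh u (sym_diff x y))"
    using assms(1) by (intro sum.cong refl) (simp add: walsh_sym_diff walsh_commute finite_subset)
  also have "\<dots> = (if x = y then 2 ^ card K else 0)"
  proof -
    have "sym_diff x y = {} \<longleftrightarrow> x = y"
      by blast
    moreover have "sym_diff x y \<subseteq> K"
      using assms(2,3) by blast
    ultimately show ?thesis
      using sum_walsh_Pow[OF assms(1)] by presburger
  qed
  finally show ?thesis .
qed

definition walsh_coeff :: "'a set \<Rightarrow> ('a set \<Rightarrow> real) \<Rightarrow> 'a set \<Rightarrow> real" where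
  "walsh_coeff K h a = (\<Sum>v\<in>Pow K. h v * walsh v a)"

lemma walsh_coeff_diff:
  "walsh_coeff K (\<lambda>v. f v - h v) a = walsh_coeff K f a - walsh_coeff K h a"
  by (simp add: walsh_coeff_def left_diff_distrib sum_subtractf)

lemma walsh_inversion:
  assumes "finite K" "u \<subseteq> K"
  shows "h u = (\<Sum>a\<in>Pow K. walsh_coeff K h a * walsh a u) / 2 ^ card K"
proof -
  have "(\<Sum>a\<in>Pow K. walsh_coeff K h a * walsh a u)
      = (\<Sum>v\<in>Pow K. h v * (\<Sum>a\<in>Pow K. walsh v a * walsh u a))"
    unfolding walsh_coeff_def sum_distrib_right sum_distrib_left
    by (subst sum.swap) (simp add: mult.assoc walsh_commute[of _ u])
  also have "\<dots> = 2 ^ card K * h u"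
    using assms by (simp add: sum_walsh_mult_walsh if_distrib[of "(*) _"] sum.delta' cong: if_cong)
  finally show ?thesis
    by simp
qed

lemma eq_zero_if_walsh_coeff_eq_zero:
  assumes "finite K" "\<And>a. a \<subseteq> K \<Longrightarrow> walsh_coeff K h a = 0" "u \<subseteq> K"
  shows "h u = 0"
  using walsh_inversion[OF assms(1,3), of h] assms(2) by simp

lemma walsh_coeff_local:
  assumes "finite K" "a \<subseteq> K" "\<not> a \<subseteq> \<gamma>" "\<And>v. h v = h (v \<inter> \<gamma>)"
  shows "walsh_coeff K h a = 0"
proof -
  obtain i where i: "i \<in> a" "i \<notin> \<gamma>"
    using assms(3) by auto
  have "finite a"
    using assms(1,2) finite_subset by blast
  show ?thesis
    unfolding walsh_coeff_def
  proof (rule sum_involution_eq_zero[where \<iota> = "\<lambda>v. sym_diff v {i}"])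
    fix v
    have "sym_diff v {i} \<inter> \<gamma> = v \<inter> \<gamma>"
      using i(2) by auto
    then have "h (sym_diff v {i}) = h v"
      using assms(4) by metis
    moreover have "walsh (sym_diff v {i}) a = - walsh v a"
      using walsh_sym_diff[OF \<open>finite a\<close>, of v "{i}"] i(1) by (simp add: walsh_commute walsh_def)
    ultimately show "h (sym_diff v {i}) * walsh (sym_diff v {i}) a = - (h v * walsh v a)"
      by simp
  qed (use i assms(2) in auto)
qed

section \<open>Characteristic functions of random sets\<close>

definition char_pmf :: "'a set pmf \<Rightarrow> 'a set \<Rightarrow> real" where
  "char_pmf Q u = measure_pmf.expectation Q (\<lambda>x. walsh x u)"

lemma integrable_walsh [simp]: "integrable (measure_pmf Q) (\<lambda>x. walsh x u)"
  by (rule measure_pmf.integrable_const_bound[where B = 1]) auto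

lemma char_pmf_eq_walsh_coeff:
  assumes "finite K" "set_pmf Q \<subseteq> Pow K"
  shows "char_pmf Q u = walsh_coeff K (pmf Q) u"
  unfolding char_pmf_def walsh_coeff_def
  using assms by (subst integral_measure_pmf[where A = "Pow K"]) (auto simp: mult.commute)

lemma pmf_eqI_char_pmf:
  assumes "finite K" "set_pmf Q \<subseteq> Pow K" "set_pmf Q' \<subseteq> Pow K"
    and "\<And>u. u \<subseteq> K \<Longrightarrow> char_pmf Q u = char_pmf Q' u"
  shows "Q = Q'"
proof (rule pmf_eqI)
  fix x
  show "pmf Q x = pmf Q' x"
  proof (cases "x \<subseteq> K")
    case True
    have "pmf Q x - pmf Q' x = 0"
      using eq_zero_if_walsh_coeff_eq_zero[OF assms(1) _ True, of "\<lambda>v. pmf Q v - pmf Q' v"]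
      by (simp add: walsh_coeff_diff assms(4) flip: char_pmf_eq_walsh_coeff[OF assms(1,2)]
            char_pmf_eq_walsh_coeff[OF assms(1,3)])
    then show ?thesis
      by simp
  next
    case False
    then have "x \<notin> set_pmf Q" "x \<notin> set_pmf Q'"
      using assms(2,3) by auto
    then show ?thesis
      by (simp add: set_pmf_iff)
  qed
qed

lemma char_pmf_pos:
  assumes "finite \<gamma>" "set_pmf Q \<subseteq> Pow \<gamma>" "pmf Q {} > 1/2"
  shows "char_pmf Q u > 0"
proof -
  have "2 * pmf Q {} - 1
      = 2 * (\<Sum>x\<in>Pow \<gamma>. if x = {} then pmf Q x else 0) - (\<Sum>x\<in>Pow \<gamma>. pmf Q x)"
    using assms(1,2) by (simp add: sum_pmf_eq_1)
  also have "\<dots> = (\<Sum>x\<in>Pow \<gamma>. pmf Q x * (if x = {} then 1 else -1))"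
    unfolding sum_distrib_left sum_subtractf[symmetric] by (intro sum.cong) auto
  also have "\<dots> \<le> (\<Sum>x\<in>Pow \<gamma>. pmf Q x * walsh x u)"
    by (intro sum_mono mult_left_mono) (auto simp: walsh_ge_minus_one)
  also have "\<dots> = char_pmf Q u"
    by (simp add: char_pmf_eq_walsh_coeff[OF assms(1,2)] walsh_coeff_def)
  finally show ?thesis
    using assms(3) by simp
qed

lemma char_pmf_inter:
  assumes "set_pmf Q \<subseteq> Pow \<gamma>"
  shows "char_pmf Q u = char_pmf Q (u \<inter> \<gamma>)"
  unfolding char_pmf_def
proof (intro integral_cong_AE AE_pmfI)
  fix x
  assume "x \<in> set_pmf Q"
  then have "x \<inter> u = x \<inter> (u \<inter> \<gamma>)"
    using assms by auto
  then show "walsh x u = walsh x (u \<inter> \<gamma>)"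
    by (simp add: walsh_def)
qed simp_all

lemma char_pmf_map_pmf:
  assumes "\<And>x. x \<in> set_pmf Q \<Longrightarrow> walsh x u = walsh (s x) \<sigma>"
  shows "char_pmf (map_pmf s Q) \<sigma> = char_pmf Q u"
  unfolding char_pmf_def integral_map_pmf
  by (intro integral_cong_AE AE_pmfI) (simp_all add: assms)

lemma expectation_Pi_pmf_prod:
  fixes f :: "'i \<Rightarrow> 'a \<Rightarrow> real"
  assumes "finite I" "\<And>i. i \<in> I \<Longrightarrow> integrable (measure_pmf (p i)) (f i)"
  shows "measure_pmf.expectation (Pi_pmf I d p) (\<lambda>h. \<Prod>i\<in>I. f i (h i))
       = (\<Prod>i\<in>I. measure_pmf.expectation (p i) (f i))"
proof -
  have component: "map_pmf (\<lambda>h. h i) (Pi_pmf I d p) = p i" if "i \<in> I" for i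
    using Pi_pmf_component[OF assms(1), of i d p] that by simp
  have "prob_space.indep_vars (measure_pmf (Pi_pmf I d p)) (\<lambda>_. borel) (\<lambda>i h. f i (h i)) I"
    by (rule prob_space.indep_vars_compose2[OF measure_pmf.prob_space_axioms
          indep_vars_Pi_pmf[OF assms(1)]]) simp
  moreover have "integrable (measure_pmf (Pi_pmf I d p)) (\<lambda>h. f i (h i))" if "i \<in> I" for i
    using assms(2)[OF that] by (simp flip: component[OF that])
  ultimately have "measure_pmf.expectation (Pi_pmf I d p) (\<lambda>h. \<Prod>i\<in>I. f i (h i))
      = (\<Prod>i\<in>I. measure_pmf.expectation (Pi_pmf I d p) (\<lambda>h. f i (h i)))"
    by (rule prob_space.indep_vars_lebesgue_integral[OF measure_pmf.prob_space_axioms assms(1)])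
  also have "\<dots> = (\<Prod>i\<in>I. measure_pmf.expectation (p i) (f i))"
    by (intro prod.cong refl) (simp add: integral_map_pmf flip: component)
  finally show ?thesis .
qed

lemma total_error_eq_map_xor_sum:
  "total_error \<Gamma> Q = map_pmf (xor_sum \<Gamma>) (Pi_pmf \<Gamma> {} Q)"
  by (simp add: total_error_def xor_sum_def[abs_def])

lemma xor_sum_subset: "xor_sum I W \<subseteq> (\<Union>i\<in>I. W i)"
proof
  fix k
  assume "k \<in> xor_sum I W"
  then have "{i \<in> I. k \<in> W i} \<noteq> {}"
    unfolding xor_sum_def by (auto dest: odd_card_imp_not_empty)
  then show "k \<in> (\<Union>i\<in>I. W i)"
    by blast
qed

lemma set_pmf_total_error:
  assumes "finite \<Gamma>" "\<And>\<gamma>. \<gamma> \<in> \<Gamma> \<Longrightarrow> \<gamma> \<subseteq> K" "\<And>\<gamma>. \<gamma> \<in> \<Gamma> \<Longrightarrow> set_pmf (Q \<gamma>) \<subseteq> Pow \<gamma>"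
  shows "set_pmf (total_error \<Gamma> Q) \<subseteq> Pow K"
proof
  fix X
  assume "X \<in> set_pmf (total_error \<Gamma> Q)"
  then obtain E where E: "E \<in> set_pmf (Pi_pmf \<Gamma> {} Q)" and X: "X = xor_sum \<Gamma> E"
    by (auto simp: total_error_eq_map_xor_sum)
  have "E \<gamma> \<subseteq> K" if "\<gamma> \<in> \<Gamma>" for \<gamma>
    using E that assms(2,3)[OF that] by (auto simp: set_Pi_pmf[OF assms(1)] PiE_dflt_def)
  then show "X \<in> Pow K"
    using xor_sum_subset[of \<Gamma> E] X by blast
qed

lemma char_pmf_total_error:
  assumes "finite \<Gamma>" "finite u"
  shows "char_pmf (total_error \<Gamma> Q) u = (\<Prod>\<gamma>\<in>\<Gamma>. char_pmf (Q \<gamma>) u)"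
proof -
  have "walsh (xor_sum \<Gamma> E) u = (\<Prod>\<gamma>\<in>\<Gamma>. walsh (E \<gamma>) u)" for E
    using walsh_xor_sum[OF assms(2,1)] by (simp add: walsh_commute[of _ u])
  then show ?thesis
    unfolding char_pmf_def total_error_eq_map_xor_sum integral_map_pmf
    using expectation_Pi_pmf_prod[OF assms(1), where f = "\<lambda>_ x. walsh x u"] by simp
qed

lemma walsh_coeff_sum_local:
  assumes "finite K" "a \<subseteq> K" "\<And>\<gamma>. \<gamma> \<in> \<Gamma> \<Longrightarrow> \<not> a \<subseteq> \<gamma>"
    and "\<And>\<gamma> v. \<gamma> \<in> \<Gamma> \<Longrightarrow> f \<gamma> v = f \<gamma> (v \<inter> \<gamma>)"
  shows "walsh_coeff K (\<lambda>v. \<Sum>\<gamma>\<in>\<Gamma>. f \<gamma> v) a = 0"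
proof -
  have "walsh_coeff K (\<lambda>v. \<Sum>\<gamma>\<in>\<Gamma>. f \<gamma> v) a = (\<Sum>\<gamma>\<in>\<Gamma>. walsh_coeff K (f \<gamma>) a)"
    unfolding walsh_coeff_def sum_distrib_right by (rule sum.swap)
  also have "\<dots> = 0"
  proof (intro sum.neutral ballI)
    fix \<gamma>
    assume "\<gamma> \<in> \<Gamma>"
    then show "walsh_coeff K (f \<gamma>) a = 0"
      using walsh_coeff_local[OF assms(1,2) assms(3)[OF \<open>\<gamma> \<in> \<Gamma>\<close>], of "f \<gamma>"] assms(4) by blast
  qed
  finally show ?thesis .
qed

section \<open>Identifiability from syndromes\<close>

locale syndrome_duality =
  fixes K :: "'a set" and M :: "'b set"
    and s :: "'a set \<Rightarrow> 'b set" and u :: "'b set \<Rightarrow> 'a set"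
  assumes finite_K: "finite K" and finite_M: "finite M"
    and syndrome_subset: "e \<subseteq> K \<Longrightarrow> s e \<subseteq> M"
    and check_subset: "\<sigma> \<subseteq> M \<Longrightarrow> u \<sigma> \<subseteq> K"
    and walsh_check: "e \<subseteq> K \<Longrightarrow> \<sigma> \<subseteq> M \<Longrightarrow> walsh e (u \<sigma>) = walsh \<sigma> (s e)"
begin

lemma syndrome_empty: "s {} = {}"
proof -
  have "(\<Sum>\<sigma>\<in>Pow M. walsh \<sigma> (s {})) = 2 ^ card M"
    using walsh_check[of "{}"] by (simp add: card_Pow finite_M)
  then show ?thesis
    using sum_walsh_Pow[OF finite_M syndrome_subset[of "{}"]] by (simp split: if_splits)
qed

lemma sum_walsh_checks:
  assumes "a \<subseteq> K" "b \<subseteq> K"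
  shows "(\<Sum>\<sigma>\<in>Pow M. walsh a (u \<sigma>) * walsh b (u \<sigma>))
       = (if s (sym_diff a b) = {} then 2 ^ card M else 0)"
proof -
  have "walsh a (u \<sigma>) * walsh b (u \<sigma>) = walsh \<sigma> (s (sym_diff a b))" if "\<sigma> \<subseteq> M" for \<sigma>
  proof -
    have "finite (u \<sigma>)"
      using check_subset[OF that] finite_K finite_subset by blast
    then have "walsh a (u \<sigma>) * walsh b (u \<sigma>) = walsh (sym_diff a b) (u \<sigma>)"
      by (simp add: walsh_commute[of _ "u \<sigma>"] walsh_sym_diff)
    also have "\<dots> = walsh \<sigma> (s (sym_diff a b))"
      using assms that by (intro walsh_check) auto
    finally show ?thesis .
  qed
  then have "(\<Sum>\<sigma>\<in>Pow M. walsh a (u \<sigma>) * walsh b (u \<sigma>)) = (\<Sum>\<sigma>\<in>Pow M. walsh \<sigma> (s (sym_diff a b)))"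
    by (intro sum.cong) auto
  also have "\<dots> = (if s (sym_diff a b) = {} then 2 ^ card M else 0)"
    using assms by (intro sum_walsh_Pow finite_M syndrome_subset) auto
  finally show ?thesis .
qed

lemma char_pmf_map_syndrome:
  assumes "set_pmf Q \<subseteq> Pow K" "\<sigma> \<subseteq> M"
  shows "char_pmf (map_pmf s Q) \<sigma> = char_pmf Q (u \<sigma>)"
  using assms by (intro char_pmf_map_pmf) (auto simp: walsh_check walsh_commute[of \<sigma>])

lemma eq_zero_if_vanishes_on_checks:
  assumes distance: "\<And>a b. a \<in> L \<Longrightarrow> b \<in> L \<Longrightarrow> s (sym_diff a b) = {} \<Longrightarrow> a = b"
    and spectrum: "\<And>a. a \<subseteq> K \<Longrightarrow> a \<notin> L \<Longrightarrow> walsh_coeff K h a = 0"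
    and vanishes: "\<And>\<sigma>. \<sigma> \<subseteq> M \<Longrightarrow> h (u \<sigma>) = 0"
    and "v \<subseteq> K"
  shows "h v = 0"
proof (rule eq_zero_if_walsh_coeff_eq_zero[OF finite_K _ \<open>v \<subseteq> K\<close>])
  fix a
  assume "a \<subseteq> K"
  show "walsh_coeff K h a = 0"
  proof (cases "a \<in> L")
    case True
    txt \<open>Pairing with the check vectors isolates the coefficient of a: any other b either lies
      outside L, so its coefficient vanishes, or has a syndrome different from that of a.\<close>
    let ?c = "\<lambda>b. walsh_coeff K h b / 2 ^ card K"
    have "0 = (\<Sum>\<sigma>\<in>Pow M. h (u \<sigma>) * walsh a (u \<sigma>))"
      using vanishes by simp
    also have "\<dots> = (\<Sum>\<sigma>\<in>Pow M. \<Sum>b\<in>Pow K. ?c b * (walsh b (u \<sigma>) * walsh a (u \<sigma>)))"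
      using walsh_inversion[OF finite_K check_subset, of _ h]
      by (intro sum.cong refl) (simp add: sum_distrib_right sum_divide_distrib mult.assoc)
    also have "\<dots> = (\<Sum>b\<in>Pow K. ?c b * (\<Sum>\<sigma>\<in>Pow M. walsh b (u \<sigma>) * walsh a (u \<sigma>)))"
      unfolding sum_distrib_left by (rule sum.swap)
    also have "\<dots> = (\<Sum>b\<in>Pow K. if b = a then ?c a * 2 ^ card M else 0)"
    proof (intro sum.cong refl)
      fix b
      assume "b \<in> Pow K"
      then show "?c b * (\<Sum>\<sigma>\<in>Pow M. walsh b (u \<sigma>) * walsh a (u \<sigma>))
          = (if b = a then ?c a * 2 ^ card M else 0)"
        using distance[OF _ True] spectrum[of b] \<open>a \<subseteq> K\<close>
        by (auto simp: sum_walsh_checks syndrome_empty)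
    qed
    also have "\<dots> = ?c a * 2 ^ card M"
      using \<open>a \<subseteq> K\<close> finite_K by simp
    finally show ?thesis
      by simp
  qed (use spectrum \<open>a \<subseteq> K\<close> in blast)
qed

end

context
  fixes K :: "nat set" and \<Gamma> :: "nat set set" and Q :: "nat set \<Rightarrow> nat set pmf"
  assumes finite_K: "finite K" and channels_subset: "\<Gamma> \<subseteq> Pow K"
    and channels: "\<forall>\<gamma>\<in>\<Gamma>. set_pmf (Q \<gamma>) \<subseteq> Pow \<gamma> \<and> pmf (Q \<gamma>) {} > 1/2"
begin

lemma finite_channels: "finite \<Gamma>"
  using channels_subset finite_K finite_subset by blast

lemma set_pmf_total_error_subset: "set_pmf (total_error \<Gamma> Q) \<subseteq> Pow K"
  using channels_subset channels by (intro set_pmf_total_error[OF finite_channels]) blast+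

lemma char_pmf_channel_pos: "\<gamma> \<in> \<Gamma> \<Longrightarrow> char_pmf (Q \<gamma>) v > 0"
  using channels_subset channels finite_K by (intro char_pmf_pos[of \<gamma>]) (auto intro: finite_subset)

lemma char_pmf_total_error_pos: "finite v \<Longrightarrow> char_pmf (total_error \<Gamma> Q) v > 0"
  by (simp add: char_pmf_total_error[OF finite_channels] prod_pos char_pmf_channel_pos)

lemma walsh_coeff_ln_char_pmf_total_error:
  assumes "a \<subseteq> K" "\<And>\<gamma>. \<gamma> \<in> \<Gamma> \<Longrightarrow> \<not> a \<subseteq> \<gamma>"
  shows "walsh_coeff K (\<lambda>v. ln (char_pmf (total_error \<Gamma> Q) v)) a = 0"
proof -
  have "ln (char_pmf (total_error \<Gamma> Q) v) = (\<Sum>\<gamma>\<in>\<Gamma>. ln (char_pmf (Q \<gamma>) v))" if "v \<in> Pow K" for v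
  proof -
    have "finite v"
      using that finite_K finite_subset by blast
    then show ?thesis
      unfolding char_pmf_total_error[OF finite_channels \<open>finite v\<close>]
      using char_pmf_channel_pos[of _ v] by (intro ln_prod[OF finite_channels]) fastforce
  qed
  then have "walsh_coeff K (\<lambda>v. ln (char_pmf (total_error \<Gamma> Q) v)) a
      = walsh_coeff K (\<lambda>v. \<Sum>\<gamma>\<in>\<Gamma>. ln (char_pmf (Q \<gamma>) v)) a"
    unfolding walsh_coeff_def by (intro sum.cong refl) simp
  also have "\<dots> = 0"
  proof (rule walsh_coeff_sum_local[OF finite_K assms])
    fix \<gamma> v
    assume "\<gamma> \<in> \<Gamma>"
    then have "char_pmf (Q \<gamma>) v = char_pmf (Q \<gamma>) (v \<inter> \<gamma>)"
      using channels by (blast intro: char_pmf_inter)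
    then show "ln (char_pmf (Q \<gamma>) v) = ln (char_pmf (Q \<gamma>) (v \<inter> \<gamma>))"
      by (rule arg_cong)
  qed
  finally show ?thesis .
qed

end

lemma total_error_eq_if_syndromes_eq:
  assumes "syndrome_duality K M s u"
    and distance: "\<And>a b. a \<in> L \<Longrightarrow> b \<in> L \<Longrightarrow> s (sym_diff a b) = {} \<Longrightarrow> a = b"
    and "\<Gamma> \<subseteq> Pow K" and low_weight: "\<And>\<gamma>. \<gamma> \<in> \<Gamma> \<Longrightarrow> Pow \<gamma> \<subseteq> L"
    and P: "\<forall>\<gamma>\<in>\<Gamma>. set_pmf (P \<gamma>) \<subseteq> Pow \<gamma> \<and> pmf (P \<gamma>) {} > 1/2"
    and P': "\<forall>\<gamma>\<in>\<Gamma>. set_pmf (P' \<gamma>) \<subseteq> Pow \<gamma> \<and> pmf (P' \<gamma>) {} > 1/2"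
    and same_syndromes: "map_pmf s (total_error \<Gamma> P') = map_pmf s (total_error \<Gamma> P)"
  shows "total_error \<Gamma> P' = total_error \<Gamma> P"
proof -
  interpret syndrome_duality K M s u
    by fact
  let ?T = "total_error \<Gamma> P" and ?T' = "total_error \<Gamma> P'"
  note T = finite_K \<open>\<Gamma> \<subseteq> Pow K\<close> P and T' = finite_K \<open>\<Gamma> \<subseteq> Pow K\<close> P'
  define h where "h v = ln (char_pmf ?T' v) - ln (char_pmf ?T v)" for v
  have "h v = 0" if "v \<subseteq> K" for v
  proof (rule eq_zero_if_vanishes_on_checks[OF distance _ _ that])
    fix a
    assume "a \<subseteq> K" "a \<notin> L"
    then have "\<not> a \<subseteq> \<gamma>" if "\<gamma> \<in> \<Gamma>" for \<gamma>
      using low_weight[OF that] by blast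
    with \<open>a \<subseteq> K\<close> show "walsh_coeff K h a = 0"
      unfolding h_def walsh_coeff_diff
      by (simp add: walsh_coeff_ln_char_pmf_total_error[OF T] walsh_coeff_ln_char_pmf_total_error[OF T'])
  next
    fix \<sigma>
    assume "\<sigma> \<subseteq> M"
    then show "h (u \<sigma>) = 0"
      using same_syndromes
      by (simp add: h_def flip: char_pmf_map_syndrome[OF set_pmf_total_error_subset[OF T]]
          char_pmf_map_syndrome[OF set_pmf_total_error_subset[OF T']])
  qed
  moreover have "char_pmf ?T v > 0" "char_pmf ?T' v > 0" if "v \<subseteq> K" for v
    using that finite_subset[OF that finite_K] by (simp_all add: char_pmf_total_error_pos[OF T] char_pmf_total_error_pos[OF T'])
  ultimately show ?thesis
    by (intro pmf_eqI_char_pmf[OF finite_K set_pmf_total_error_subset[OF T'] set_pmf_total_error_subset[OF T]])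
      (simp add: h_def)
qed

section \<open>Data-syndrome codes\<close>

text \<open>
  xz_swap n is the paper's v \<mapsto> bar v on F_2^{2n}, and check_vec n l A g \<sigma> is the vector
  (sum of bar f^(i) over i \<in> \<sigma>, \<sigma>) of F_2^N.
\<close>

definition xz_swap :: "nat \<Rightarrow> nat set \<Rightarrow> nat set" where
  "xz_swap n v = {k. k < n \<and> n + k \<in> v} \<union> (+) n ` {k. k < n \<and> k \<in> v}"

definition check_vec :: "nat \<Rightarrow> nat \<Rightarrow> (nat \<Rightarrow> nat \<Rightarrow> bool) \<Rightarrow> (nat \<Rightarrow> nat set) \<Rightarrow> nat set \<Rightarrow> nat set" where
  "check_vec n l A g \<sigma> = xor_sum \<sigma> (\<lambda>i. xz_swap n (fvec l A g i)) \<union> (+) (2*n) ` \<sigma>"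

lemma xz_swap_subset: "xz_swap n v \<subseteq> {..<2*n}"
  by (auto simp: xz_swap_def)

lemma walsh_xz_swap: "walsh e (xz_swap n v) = sign_of (symp n v (e \<inter> {..<2*n}))"
proof -
  let ?z = "{k. k < n \<and> n + k \<in> v \<and> k \<in> e}" and ?x = "{k. k < n \<and> k \<in> v \<and> n + k \<in> e}"
  have "e \<inter> xz_swap n v = ?z \<union> (+) n ` ?x"
    by (auto simp: xz_swap_def)
  moreover have "?z \<inter> (+) n ` ?x = {}"
    by auto
  ultimately have "card (e \<inter> xz_swap n v) = card ?z + card ?x"
    by (simp add: card_Un_disjoint card_image)
  moreover have "symp n v (e \<inter> {..<2*n}) = odd (card ?x + card ?z)"
    unfolding symp_def by (intro arg_cong[where f = odd] arg_cong2[where f = "(+)"] arg_cong[where f = card]) auto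
  ultimately have "symp n v (e \<inter> {..<2*n}) = odd (card (e \<inter> xz_swap n v))"
    by (simp add: add.commute)
  then show ?thesis
    by (simp add: walsh_def sign_of_odd)
qed

lemma xor_sum_xz_swap_subset: "xor_sum I (\<lambda>i. xz_swap n (W i)) \<subseteq> {..<2*n}"
proof -
  have "xor_sum I (\<lambda>i. xz_swap n (W i)) \<subseteq> (\<Union>i\<in>I. xz_swap n (W i))"
    by (rule xor_sum_subset)
  also have "\<dots> \<subseteq> {..<2*n}"
    by (rule UN_least) (rule xz_swap_subset)
  finally show ?thesis .
qed

lemma check_vec_subset: "\<sigma> \<subseteq> {..<m} \<Longrightarrow> check_vec n l A g \<sigma> \<subseteq> {..<2*n+m}"
  using xor_sum_xz_swap_subset[of \<sigma> n "fvec l A g"] by (auto simp: check_vec_def)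

lemma walsh_check_vec_eq_syn:
  assumes "finite e" "\<sigma> \<subseteq> {..<m}"
  shows "walsh e (check_vec n l A g \<sigma>) = walsh \<sigma> (syn n m l A g e)"
proof -
  let ?X = "xor_sum \<sigma> (\<lambda>i. xz_swap n (fvec l A g i))" and ?Y = "(+) (2*n) ` \<sigma>"
  have "finite \<sigma>"
    using assms(2) finite_subset by blast
  from xor_sum_xz_swap_subset[of \<sigma> n "fvec l A g"] have "check_vec n l A g \<sigma> = sym_diff ?X ?Y"
    by (auto simp: check_vec_def)
  then have "walsh e (check_vec n l A g \<sigma>) = walsh e ?X * walsh ?Y e"
    by (simp add: walsh_sym_diff[OF assms(1)] walsh_commute[of e ?Y])
  also have "walsh e ?X = (\<Prod>i\<in>\<sigma>. sign_of (symp n (fvec l A g i) (e \<inter> {..<2*n})))"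
    by (simp add: walsh_xor_sum[OF assms(1) \<open>finite \<sigma>\<close>] walsh_xz_swap)
  also have "walsh ?Y e = (\<Prod>i\<in>\<sigma>. sign_of (2*n + i \<in> e))"
    unfolding walsh_eq_prod[OF finite_imageI[OF \<open>finite \<sigma>\<close>]]
    by (rule prod.reindex_cong[where l = "(+) (2*n)"]) auto
  also have "(\<Prod>i\<in>\<sigma>. sign_of (symp n (fvec l A g i) (e \<inter> {..<2*n}))) * (\<Prod>i\<in>\<sigma>. sign_of (2*n + i \<in> e))
      = (\<Prod>i\<in>\<sigma>. sign_of (i \<in> syn n m l A g e))"
    unfolding prod.distrib[symmetric] sign_of_neq[symmetric]
    using assms(2) by (intro prod.cong refl) (auto simp: syn_def)
  also have "\<dots> = walsh \<sigma> (syn n m l A g e)"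
    by (simp add: walsh_eq_prod[OF \<open>finite \<sigma>\<close>])
  finally show ?thesis .
qed

lemma syndrome_duality_syn:
  "syndrome_duality {..<2*n+m} {..<m} (syn n m l A g) (check_vec n l A g)"
  by unfold_locales
    (auto simp: syn_def check_vec_subset walsh_check_vec_eq_syn finite_subset)

lemma wtP_mono: "a \<subseteq> b \<Longrightarrow> wtP n m a \<le> wtP n m b"
  unfolding wtP_def by (intro add_mono card_mono) auto

lemma wtP_Un_le: "wtP n m (a \<union> b) \<le> wtP n m a + wtP n m b"
proof -
  let ?Q = "\<lambda>e. {i. i < n \<and> (i \<in> e \<or> n + i \<in> e)}" and ?R = "\<lambda>e. {j. j < m \<and> 2*n + j \<in> e}"
  have "?Q (a \<union> b) = ?Q a \<union> ?Q b" "?R (a \<union> b) = ?R a \<union> ?R b"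
    by auto
  then show ?thesis
    unfolding wtP_def using card_Un_le[of "?Q a" "?Q b"] card_Un_le[of "?R a" "?R b"] by simp
qed

lemma pure_distance_le_wtP:
  assumes "e \<subseteq> {..<2*n+m}" "e \<noteq> {}" "syn n m l A g e = {}"
  shows "pure_distance n m l A g \<le> wtP n m e"
  unfolding pure_distance_def
proof (rule Min_le)
  have "{wtP n m e | e. e \<subseteq> {..<2*n+m} \<and> e \<noteq> {} \<and> syn n m l A g e = {}} \<subseteq> wtP n m ` Pow {..<2*n+m}"
    by auto
  then show "finite {wtP n m e | e. e \<subseteq> {..<2*n+m} \<and> e \<noteq> {} \<and> syn n m l A g e = {}}"
    by (rule finite_subset) simp
qed (use assms in blast)

lemma eq_if_syn_sym_diff_eq_empty:
  assumes "2 * t < pure_distance n m l A g"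
    and "a \<subseteq> {..<2*n+m}" "b \<subseteq> {..<2*n+m}" "wtP n m a \<le> t" "wtP n m b \<le> t"
    and "syn n m l A g (sym_diff a b) = {}"
  shows "a = b"
proof (rule ccontr)
  assume "a \<noteq> b"
  then have "pure_distance n m l A g \<le> wtP n m (sym_diff a b)"
    using assms(2,3,6) by (intro pure_distance_le_wtP) auto
  also have "\<dots> \<le> wtP n m (a \<union> b)"
    by (intro wtP_mono) blast
  also have "\<dots> \<le> 2 * t"
    using wtP_Un_le[of n m a b] assms(4,5) by linarith
  finally show False
    using assms(1) by simp
qed

theorem corollary11:
  fixes n m l t :: nat
    and g :: "nat \<Rightarrow> nat set"
    and A :: "nat \<Rightarrow> nat \<Rightarrow> bool"
    and P P' :: "nat set \<Rightarrow> nat set pmf"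
  assumes "l \<le> m"
    and "\<forall>j<l. g j \<subseteq> {..<2*n}"
    and "\<forall>i<l. \<forall>j<l. \<not> symp n (g i) (g j)"
    and "int t \<le> (int (pure_distance n m l A g) - 1) div 2"
    and "\<forall>\<gamma>\<in>Gamma n m t. set_pmf (P \<gamma>) \<subseteq> Pow \<gamma> \<and> pmf (P \<gamma>) {} > 1/2"
    and "\<forall>\<gamma>\<in>Gamma n m t. set_pmf (P' \<gamma>) \<subseteq> Pow \<gamma> \<and> pmf (P' \<gamma>) {} > 1/2"
    and "syndrome_statistics n m l A g (Gamma n m t) P' = syndrome_statistics n m l A g (Gamma n m t) P"
  shows "total_error (Gamma n m t) P' = total_error (Gamma n m t) P"
proof -
  let ?L = "{a. a \<subseteq> {..<2*n+m} \<and> wtP n m a \<le> t}"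
  have two_t_lt: "2 * t < pure_distance n m l A g"
    using assms(4) by presburger
  have distance: "a = b" if "a \<in> ?L" "b \<in> ?L" "syn n m l A g (sym_diff a b) = {}" for a b
    by (rule eq_if_syn_sym_diff_eq_empty[OF two_t_lt]) (use that in auto)
  have channels: "Gamma n m t \<subseteq> Pow {..<2*n+m}"
    by (auto simp: Gamma_def)
  have low_weight: "Pow \<gamma> \<subseteq> ?L" if "\<gamma> \<in> Gamma n m t" for \<gamma>
    using that by (auto simp: Gamma_def intro: le_trans[OF wtP_mono])
  have same_syndromes: "map_pmf (syn n m l A g) (total_error (Gamma n m t) P')
      = map_pmf (syn n m l A g) (total_error (Gamma n m t) P)"
    using assms(7) by (simp add: syndrome_statistics_def)
  show ?thesis
    by (rule total_error_eq_if_syndromes_eq[OF syndrome_duality_syn distance channels low_weight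
          assms(5,6) same_syndromes])
qed

end
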